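(* Let $\gamma<\delta$, $c>0$, $g(t)=c(\delta-t)$ on $[\gamma,\delta]$, and let $0<\alpha<\beta$. Let $s\in(\gamma,\delta)$ and let $\varphi:[\gamma,\delta]\to[0,\infty)$ be a concave function with $\varphi(t)>0$ for all $t\in[\gamma,s]$. Then \[\frac{\int_\gamma^{s} t\,\varphi(t)^{\alpha-\beta}g(t)^\beta\,dt}{\int_\gamma^{s} \varphi(t)^{\alpha-\beta}g(t)^\beta\,dt}\leq\frac{\int_\gamma^{s} t\,(\delta-t)^{\alpha-\beta}g(t)^\beta\,dt}{\int_\gamma^{s} (\delta-t)^{\alpha-\beta}g(t)^\beta\,dt}=\frac{\int_\gamma^{s} t\,(\delta-t)^{\alpha}\,dt}{\int_\gamma^{s} (\delta-t)^{\alpha}\,dt}.\] *)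

theory Defs
  imports "HOL-Analysis.Analysis"
begin

end

theory Submission
  imports Defs
begin

text \<open>
  Since g(t) = c (\<delta> - t), the weight \<phi>(t)^(\<alpha>-\<beta>) g(t)^\<beta> is c^\<beta> (\<delta> - t)^\<alpha> times the
  factor (\<phi>(t)/(\<delta> - t))^(\<alpha>-\<beta>). Concavity of \<phi> together with \<phi>(\<delta>) \<ge> 0 makes
  \<phi>(t)/(\<delta> - t) nondecreasing, so, as \<alpha> - \<beta> < 0, the factor is nonincreasing. Reweighting
  a density by a nonincreasing factor can only move its barycentre to the left, which is a
  Chebyshev-type integral inequality. For \<phi>(t) = \<delta> - t the factor is constant, whence the
  equality.
\<close>

lemma concave_on_div_dist_right_mono:
  fixes f :: "real \<Rightarrow> real"
  assumes "concave_on {a..b} f" and "f b \<ge> 0"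
    and "a \<le> t" and "t \<le> u" and "u < b"
  shows "f t / (b - t) \<le> f u / (b - u)"
proof -
  define l where "l = (u - t) / (b - t)"
  have "b - t > 0" "b - u > 0" using assms by auto
  then have l: "0 \<le> l" "l \<le> 1" and one_minus_l: "1 - l = (b - u) / (b - t)"
    using assms by (auto simp: l_def field_simps)
  have "(1 - l) *\<^sub>R t + l *\<^sub>R b = t + l * (b - t)"
    by (simp add: algebra_simps)
  also have "\<dots> = u"
    using \<open>b - t > 0\<close> by (simp add: l_def)
  finally have "(1 - l) *\<^sub>R t + l *\<^sub>R b = u" .
  then have "(1 - l) * f t + l * f b \<le> f u"
    using concave_onD[OF assms(1) l, of t b] assms by auto
  moreover have "l * f b \<ge> 0" using l assms(2) by simp
  ultimately have "(b - u) / (b - t) * f t \<le> f u"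
    unfolding one_minus_l by linarith
  with \<open>b - t > 0\<close> \<open>b - u > 0\<close> show ?thesis by (simp add: field_simps)
qed

lemma antimono_on_concave_div_dist_powr:
  fixes f :: "real \<Rightarrow> real"
  assumes "concave_on {a..b} f" and "f b \<ge> 0"
    and "c < b" and "\<forall>t\<in>{a..c}. f t > 0" and "p \<le> 0"
  shows "antimono_on {a..c} (\<lambda>t. (f t / (b - t)) powr p)"
proof (rule monotone_onI)
  fix t u assume "t \<in> {a..c}" "u \<in> {a..c}" "t \<le> u"
  with assms show "(f u / (b - u)) powr p \<le> (f t / (b - t)) powr p"
    by (intro powr_mono2' concave_on_div_dist_right_mono[OF assms(1,2)]) auto
qed

lemma integral_pos_continuous_pos:
  fixes f :: "real \<Rightarrow> real"
  assumes "a < b" and "continuous_on {a..b} f" and "\<forall>t\<in>{a..b}. f t > 0"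
  shows "integral {a..b} f > 0"
proof -
  obtain x where x: "x \<in> {a..b}" and min: "\<forall>y\<in>{a..b}. f x \<le> f y"
    using continuous_attains_inf[OF compact_Icc _ assms(2)] assms(1) by auto
  have "integral {a..b} (\<lambda>t. f x) \<le> integral {a..b} f"
    using min assms(2) by (intro integral_le integrable_continuous_interval) auto
  moreover have "integral {a..b} (\<lambda>t. f x) > 0"
    using x assms(1,3) by simp
  ultimately show ?thesis
    by linarith
qed

lemma integrable_continuous_mult_antimono:
  fixes h r :: "real \<Rightarrow> real"
  assumes "continuous_on {a..b} h" and "antimono_on {a..b} r"
  shows "(\<lambda>t. h t * r t) integrable_on {a..b}"
proof -
  have "mono_on {a..b} (\<lambda>t. - r t)"
    using assms(2) by (auto simp: monotone_on_def)
  then have "integrable (lebesgue_on {a..b}) (\<lambda>t. - r t)"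
    by (rule integrable_mono_on)
  then have "r absolutely_integrable_on {a..b}"
    using integrable_restrict_space[of "{a..b}" lebesgue r]
    by (simp add: absolutely_integrable_on_def set_integrable_def)
  moreover have "bounded (h ` {a..b})"
    using assms(1) by (intro compact_imp_bounded compact_continuous_image) auto
  moreover have "h \<in> borel_measurable (lebesgue_on {a..b})"
    using assms(1) by (intro continuous_imp_measurable_on_sets_lebesgue) auto
  ultimately have "(\<lambda>t. h t * r t) absolutely_integrable_on {a..b}"
    by (intro absolutely_integrable_bounded_measurable_product_real) auto
  then show ?thesis
    using absolutely_integrable_on_def by blast
qed

lemma barycentre_antimono_reweight_le:
  fixes w r :: "real \<Rightarrow> real"
  assumes w_cont: "continuous_on {a..b} w" and w_nonneg: "\<forall>t\<in>{a..b}. w t \<ge> 0"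
    and w_pos: "integral {a..b} w > 0"
    and r_anti: "antimono_on {a..b} r" and r_pos: "r b > 0"
  shows "integral {a..b} (\<lambda>t. t * (w t * r t)) / integral {a..b} (\<lambda>t. w t * r t)
       \<le> integral {a..b} (\<lambda>t. t * w t) / integral {a..b} w"
proof -
  have "a \<le> b"
    using w_pos by (cases "a \<le> b") auto
  have tw_cont: "continuous_on {a..b} (\<lambda>t. t * w t)"
    by (intro continuous_intros w_cont)
  have w_int: "w integrable_on {a..b}" and tw_int: "(\<lambda>t. t * w t) integrable_on {a..b}"
    using w_cont tw_cont by (auto intro: integrable_continuous_interval)
  have wr_int: "(\<lambda>t. w t * r t) integrable_on {a..b}"
    and twr_int: "(\<lambda>t. t * w t * r t) integrable_on {a..b}"
    using w_cont tw_cont r_anti by (auto intro: integrable_continuous_mult_antimono)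
  have "integral {a..b} (\<lambda>t. r b * w t) \<le> integral {a..b} (\<lambda>t. w t * r t)"
  proof (rule integral_le)
    fix t assume "t \<in> {a..b}"
    then have "r b \<le> r t" using r_anti \<open>a \<le> b\<close> by (auto simp: monotone_on_def)
    then show "r b * w t \<le> w t * r t"
      using w_nonneg \<open>t \<in> {a..b}\<close> by (metis mult.commute mult_right_mono)
  qed (use wr_int integrable_on_mult_right[OF w_int] in auto)
  moreover have "integral {a..b} (\<lambda>t. r b * w t) > 0"
    using w_pos r_pos by simp
  ultimately have wr_pos: "integral {a..b} (\<lambda>t. w t * r t) > 0"
    by linarith
  define m where "m = integral {a..b} (\<lambda>t. t * w t) / integral {a..b} w"
  define C where "C = r (max a (min b m))"
  \<comment> \<open>As \<open>r\<close> is antitone and \<open>C\<close> is its value at the clamped mean, \<open>t - m\<close> and \<open>r t - C\<close> have opposite signs.\<close>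
  have pointwise: "t * w t * r t - m * (w t * r t) \<le> C * (t * w t - m * w t)"
    if t: "t \<in> {a..b}" for t
  proof -
    have "(t - m) * (r t - C) \<le> 0"
    proof (cases "m \<le> t")
      case True
      then have "r t \<le> C" unfolding C_def using t r_anti by (auto simp: monotone_on_def)
      with True show ?thesis by (simp add: mult_nonneg_nonpos)
    next
      case False
      then have "C \<le> r t" unfolding C_def using t r_anti by (auto simp: monotone_on_def)
      with False show ?thesis by (simp add: mult_nonpos_nonneg)
    qed
    then have "w t * ((t - m) * (r t - C)) \<le> 0"
      using w_nonneg t by (simp add: mult_nonneg_nonpos)
    then show ?thesis by (simp add: algebra_simps)
  qed
  have twr_diff_int: "(\<lambda>t. t * w t * r t - m * (w t * r t)) integrable_on {a..b}"
    by (intro integrable_diff twr_int integrable_on_mult_right wr_int)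
  have tw_diff_int: "(\<lambda>t. t * w t - m * w t) integrable_on {a..b}"
    by (intro integrable_diff tw_int integrable_on_mult_right w_int)
  have "integral {a..b} (\<lambda>t. t * w t * r t - m * (w t * r t))
      \<le> integral {a..b} (\<lambda>t. C * (t * w t - m * w t))"
    using twr_diff_int integrable_on_mult_right[OF tw_diff_int] pointwise
    by (intro integral_le) auto
  then have "integral {a..b} (\<lambda>t. t * w t * r t) - m * integral {a..b} (\<lambda>t. w t * r t)
      \<le> C * (integral {a..b} (\<lambda>t. t * w t) - m * integral {a..b} w)"
    using twr_int wr_int tw_int w_int
    by (simp add: integral_diff integrable_on_mult_right)
  also have "\<dots> = 0"
    using w_pos by (simp add: m_def)
  finally have "integral {a..b} (\<lambda>t. t * w t * r t) \<le> m * integral {a..b} (\<lambda>t. w t * r t)"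
    by simp
  with wr_pos show ?thesis
    by (simp add: m_def pos_divide_le_eq mult.assoc)
qed

lemma powr_weight_decompose:
  fixes c d t p q x :: real
  assumes "c > 0" and "d - t > 0" and "x > 0"
  shows "x powr p * (c * (d - t)) powr q = c powr q * ((d - t) powr (p + q) * (x / (d - t)) powr p)"
proof -
  have "(c * (d - t)) powr q = c powr q * (d - t) powr q"
    using assms by (simp add: powr_mult)
  moreover have "(x / (d - t)) powr p = x powr p / (d - t) powr p"
    using assms by (simp add: powr_divide)
  moreover have "(d - t) powr (p + q) = (d - t) powr p * (d - t) powr q"
    by (rule powr_add)
  ultimately show ?thesis
    using assms by (simp add: field_simps)
qed

lemma barycentre_powr_weight_eq:
  fixes \<gamma> s \<delta> c \<alpha> \<beta> :: real and g \<psi> :: "real \<Rightarrow> real"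
  assumes "c > 0" and "s < \<delta>"
    and "\<forall>t\<in>{\<gamma>..s}. g t = c * (\<delta> - t)" and "\<forall>t\<in>{\<gamma>..s}. \<psi> t > 0"
  shows "integral {\<gamma>..s} (\<lambda>t. t * \<psi> t powr (\<alpha> - \<beta>) * g t powr \<beta>)
           / integral {\<gamma>..s} (\<lambda>t. \<psi> t powr (\<alpha> - \<beta>) * g t powr \<beta>)
       = integral {\<gamma>..s} (\<lambda>t. t * ((\<delta> - t) powr \<alpha> * (\<psi> t / (\<delta> - t)) powr (\<alpha> - \<beta>)))
           / integral {\<gamma>..s} (\<lambda>t. (\<delta> - t) powr \<alpha> * (\<psi> t / (\<delta> - t)) powr (\<alpha> - \<beta>))"
proof -
  define v where "v t = (\<delta> - t) powr \<alpha> * (\<psi> t / (\<delta> - t)) powr (\<alpha> - \<beta>)" for t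
  have weight: "\<psi> t powr (\<alpha> - \<beta>) * g t powr \<beta> = c powr \<beta> * v t" if "t \<in> {\<gamma>..s}" for t
    using powr_weight_decompose[of c \<delta> t "\<psi> t" "\<alpha> - \<beta>" \<beta>] assms that by (simp add: v_def)
  have "integral {\<gamma>..s} (\<lambda>t. t * \<psi> t powr (\<alpha> - \<beta>) * g t powr \<beta>)
      = c powr \<beta> * integral {\<gamma>..s} (\<lambda>t. t * v t)"
    using weight by (subst integral_mult_right[symmetric], intro integral_cong) (simp add: mult.assoc)
  moreover have "integral {\<gamma>..s} (\<lambda>t. \<psi> t powr (\<alpha> - \<beta>) * g t powr \<beta>)
      = c powr \<beta> * integral {\<gamma>..s} v"
    using weight by (subst integral_mult_right[symmetric], intro integral_cong) simp
  ultimately show ?thesis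
    using \<open>c > 0\<close> by (simp add: v_def[abs_def])
qed

theorem mainTheorem9:
  fixes \<gamma> \<delta> c \<alpha> \<beta> s :: real and g \<phi> :: "real \<Rightarrow> real"
  assumes "\<gamma> < \<delta>" and "c > 0"
    and g_def: "\<forall>t\<in>{\<gamma>..\<delta>}. g t = c * (\<delta> - t)"
    and "0 < \<alpha>" and "\<alpha> < \<beta>"
    and "\<gamma> < s" and "s < \<delta>"
    and "concave_on {\<gamma>..\<delta>} \<phi>"
    and "\<forall>t\<in>{\<gamma>..\<delta>}. \<phi> t \<ge> 0"
    and "\<forall>t\<in>{\<gamma>..s}. \<phi> t > 0"
  shows "integral {\<gamma>..s} (\<lambda>t. t * \<phi> t powr (\<alpha> - \<beta>) * g t powr \<beta>)
           / integral {\<gamma>..s} (\<lambda>t. \<phi> t powr (\<alpha> - \<beta>) * g t powr \<beta>)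
         \<le> integral {\<gamma>..s} (\<lambda>t. t * (\<delta> - t) powr (\<alpha> - \<beta>) * g t powr \<beta>)
           / integral {\<gamma>..s} (\<lambda>t. (\<delta> - t) powr (\<alpha> - \<beta>) * g t powr \<beta>)
       \<and> integral {\<gamma>..s} (\<lambda>t. t * (\<delta> - t) powr (\<alpha> - \<beta>) * g t powr \<beta>)
           / integral {\<gamma>..s} (\<lambda>t. (\<delta> - t) powr (\<alpha> - \<beta>) * g t powr \<beta>)
         = integral {\<gamma>..s} (\<lambda>t. t * (\<delta> - t) powr \<alpha>)
           / integral {\<gamma>..s} (\<lambda>t. (\<delta> - t) powr \<alpha>)"
proof -
  define w where "w t = (\<delta> - t) powr \<alpha>" for t
  define r where "r t = (\<phi> t / (\<delta> - t)) powr (\<alpha> - \<beta>)" for t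
  have g_on: "\<forall>t\<in>{\<gamma>..s}. g t = c * (\<delta> - t)" and dist_pos: "\<forall>t\<in>{\<gamma>..s}. \<delta> - t > 0"
    using g_def \<open>s < \<delta>\<close> by auto
  have w_cont: "continuous_on {\<gamma>..s} w"
    unfolding w_def using dist_pos by (intro continuous_intros) auto
  have r_anti: "antimono_on {\<gamma>..s} r"
    unfolding r_def using assms by (intro antimono_on_concave_div_dist_powr) auto
  have "\<phi> s > 0"
    using assms(6,10) by auto
  then have r_pos: "r s > 0"
    using \<open>s < \<delta>\<close> by (simp add: r_def)
  have w_pos: "integral {\<gamma>..s} w > 0"
    using \<open>\<gamma> < s\<close> w_cont dist_pos by (intro integral_pos_continuous_pos) (auto simp: w_def)
  have reweight:
    "integral {\<gamma>..s} (\<lambda>t. t * (w t * r t)) / integral {\<gamma>..s} (\<lambda>t. w t * r t)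
      \<le> integral {\<gamma>..s} (\<lambda>t. t * w t) / integral {\<gamma>..s} w"
    by (rule barycentre_antimono_reweight_le[OF w_cont _ w_pos r_anti r_pos]) (simp add: w_def)
  have unit: "((\<delta> - t) / (\<delta> - t)) powr (\<alpha> - \<beta>) = 1" if "t \<in> {\<gamma>..s}" for t
    using that \<open>s < \<delta>\<close> by simp
  have dist_eq:
    "integral {\<gamma>..s} (\<lambda>t. t * (\<delta> - t) powr (\<alpha> - \<beta>) * g t powr \<beta>)
       / integral {\<gamma>..s} (\<lambda>t. (\<delta> - t) powr (\<alpha> - \<beta>) * g t powr \<beta>)
     = integral {\<gamma>..s} (\<lambda>t. t * (\<delta> - t) powr \<alpha>) / integral {\<gamma>..s} (\<lambda>t. (\<delta> - t) powr \<alpha>)"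
    using barycentre_powr_weight_eq[OF \<open>c > 0\<close> \<open>s < \<delta>\<close> g_on dist_pos, of \<alpha> \<beta>]
    by (simp only: unit mult_1_right cong: integral_cong)
  show ?thesis
    using reweight
    unfolding barycentre_powr_weight_eq[OF \<open>c > 0\<close> \<open>s < \<delta>\<close> g_on assms(10)] dist_eq
    by (simp add: w_def[abs_def] r_def[abs_def])
qed

end
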